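(* Let $N$ and $M$ be large positive parameters, let $\mathcal{X}$ be any subset of $\{1,2,\ldots,10^M\}$, and let $\Delta=\Delta(N)$ be any function with $\Delta\to\infty$. Then for $\pi(N)\bigl(1+O(1/\Delta)\bigr)$ primes $p\le N$ we have $$\#\{x \bmod p \;:\; x\in\mathcal{X}\}=|\mathcal{X}|+O\!\left(\frac{|\mathcal{X}|}{1+\frac{\pi(N)\log M}{M|\mathcal{X}|\Delta}}\right).$$ That is, the number of primes $p\le N$ for which this estimate holds (with an absolute implied constant) is $\pi(N)(1+O(1/\Delta))$.
   Context: $\pi(N)$ denotes the number of primes $p\le N$. $\#\{x \bmod p : x\in\mathcal{X}\}$ is the number of distinct residues modulo $p$ of elements of $\mathcal{X}$. *)

theory Defs
  imports "HOL-Computational_Algebra.Primes" Complex_Main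
begin

definition prime_pi :: "nat \<Rightarrow> nat" where
  "prime_pi N = card {p::nat. prime p \<and> p \<le> N}"

definition num_residues :: "nat set \<Rightarrow> nat \<Rightarrow> nat" where
  "num_residues X p = card ((\<lambda>x. x mod p) ` X)"

end

theory Submission
  imports Defs
begin

text \<open>Two elements x < y of X collide modulo p only if p divides y - x, and a positive
  integer below 10^M has O(M / log M) prime factors. Double counting over pairs therefore bounds
  the total loss, summed over the primes p \<le> N, of |X| - #{x mod p} by O(|X|^2 M / log M).
  By Markov's inequality only O(\<pi>(N) / \<Delta>) primes lose more than the threshold of the
  statement: either that threshold exceeds the trivial bound |X|, or it is of order
  M |X|^2 \<Delta> / (\<pi>(N) log M).\<close>

lemma prod_prime_factors_dvd:
  fixes n :: nat
  assumes "n > 0"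
  shows "\<Prod>(prime_factors n) dvd n"
proof -
  have "\<Prod>(prime_factors n) dvd (\<Prod>p\<in>prime_factors n. p ^ multiplicity p n)"
    by (intro prod_dvd_prod dvd_power) (auto simp: prime_factors_multiplicity)
  with assms show ?thesis
    by (simp add: prod_prime_factors)
qed

lemma power_card_large_prime_factors_le:
  fixes n :: nat and y :: real
  assumes "n > 0" "y \<ge> 0"
  shows "y ^ card {p \<in> prime_factors n. y \<le> real p} \<le> real n"
proof -
  let ?S = "{p \<in> prime_factors n. y \<le> real p}"
  have "y ^ card ?S = (\<Prod>p\<in>?S. y)" by simp
  also have "\<dots> \<le> (\<Prod>p\<in>?S. real p)" using assms(2) by (intro prod_mono) auto
  also have "\<dots> \<le> real n"
  proof -
    have "\<Prod>?S dvd \<Prod>(prime_factors n)" by (intro prod_dvd_prod_subset) auto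
    then have "\<Prod>?S dvd n" using prod_prime_factors_dvd[OF assms(1)] by (rule dvd_trans)
    then have "\<Prod>?S \<le> n" using assms(1) by (rule dvd_imp_le)
    then show ?thesis by (simp only: of_nat_prod [symmetric] of_nat_le_iff)
  qed
  finally show ?thesis .
qed

lemma sqrt_add_1_le_div_ln:
  fixes x :: real
  assumes "x > 1"
  shows "sqrt x + 1 \<le> 3 * x / ln x"
proof -
  have lnx: "ln x > 0" using assms by simp
  have "ln x = 2 * ln (sqrt x)" using assms by (simp add: ln_sqrt)
  also have "\<dots> \<le> 2 * (sqrt x - 1)" using ln_le_minus_one[of "sqrt x"] assms by simp
  finally have "sqrt x * ln x \<le> sqrt x * (2 * sqrt x - 2)"
    by (intro mult_left_mono) (use assms in auto)
  also have "\<dots> = 2 * x - 2 * sqrt x" using assms by (simp add: algebra_simps)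
  finally have "sqrt x * ln x \<le> 2 * x" using real_sqrt_ge_zero[of x] assms by linarith
  then have "sqrt x \<le> 2 * x / ln x" using lnx by (simp add: field_simps)
  moreover have "ln x \<le> x" using ln_le_minus_one[of x] assms by linarith
  then have "1 \<le> x / ln x" using lnx by (simp add: field_simps)
  ultimately have "sqrt x + 1 \<le> 2 * x / ln x + x / ln x" by linarith
  also have "\<dots> = 3 * x / ln x" by (simp add: field_simps)
  finally show ?thesis .
qed

lemma ln_10_less_4: "ln (10::real) < 4"
proof -
  have "ln (10::real) < ln 16" by simp
  also have "\<dots> = 4 * ln 2" using ln_realpow[of 2 4] by simp
  finally show ?thesis using ln_2_less_1 by simp
qed

lemma card_prime_factors_le:
  fixes n M :: nat
  assumes "0 < n" "n \<le> 10 ^ M" "M \<ge> 2"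
  shows "real (card (prime_factors n)) \<le> 11 * real M / ln (real M)"
proof -
  let ?y = "sqrt M"
  define Small where "Small = {p \<in> prime_factors n. real p < ?y}"
  define Large where "Large = {p \<in> prime_factors n. ?y \<le> real p}"
  have M: "real M > 1" and lnM: "ln M > 0" using assms(3) by auto
  have "Small \<subseteq> {..nat \<lfloor>?y\<rfloor>}"
    unfolding Small_def by (auto simp: le_nat_iff le_floor_iff)
  then have "card Small \<le> nat \<lfloor>?y\<rfloor> + 1"
    using card_mono[OF finite_atMost] by fastforce
  moreover have "real (nat \<lfloor>?y\<rfloor>) \<le> ?y" by simp
  ultimately have small: "real (card Small) \<le> 3 * real M / ln (real M)"
    using sqrt_add_1_le_div_ln[OF M] by linarith
  have "?y ^ card Large \<le> real n"
    unfolding Large_def by (rule power_card_large_prime_factors_le[OF assms(1)]) simp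
  also have "\<dots> \<le> 10 ^ M"
    using assms(2) by (metis of_nat_le_iff of_nat_numeral of_nat_power)
  finally have "?y ^ card Large \<le> 10 ^ M" .
  then have "ln (?y ^ card Large) \<le> ln (10 ^ M)"
    using M by (subst ln_le_cancel_iff) auto
  then have "card Large * (ln M / 2) \<le> M * ln 10"
    using M by (simp add: ln_realpow ln_sqrt)
  also have "\<dots> \<le> real M * 4" by (intro mult_left_mono) (use ln_10_less_4 in auto)
  finally have large: "real (card Large) \<le> 8 * real M / ln (real M)"
    using lnM by (simp add: field_simps)
  have "finite Small" "finite Large"
    by (rule finite_subset[of _ "prime_factors n"], auto simp: Small_def Large_def)+
  then have "card (Small \<union> Large) = card Small + card Large"
    by (rule card_Un_disjoint) (auto simp: Small_def Large_def)
  moreover have "prime_factors n = Small \<union> Large"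
    unfolding Small_def Large_def by auto
  ultimately have "card (prime_factors n) = card Small + card Large" by simp
  with small large show ?thesis by simp
qed

lemma card_le_card_image_add_collisions:
  fixes f :: "'a::linorder \<Rightarrow> 'b"
  assumes "finite X"
  shows "card X \<le> card (f ` X) + card {(x, y) \<in> X \<times> X. x < y \<and> f x = f y}"
proof -
  define Pairs where "Pairs = {(x, y) \<in> X \<times> X. x < y \<and> f x = f y}"
  define Repeated where "Repeated = snd ` Pairs"
  have "Pairs \<subseteq> X \<times> X" unfolding Pairs_def by auto
  then have "finite Pairs" using assms finite_subset by blast
  have "inj_on f (X - Repeated)"
  proof (rule inj_onI)
    fix a b assume a: "a \<in> X - Repeated" and b: "b \<in> X - Repeated" and "f a = f b"
    show "a = b"
    proof (rule ccontr)
      assume "a \<noteq> b"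
      then have "(a, b) \<in> Pairs \<or> (b, a) \<in> Pairs"
        using a b \<open>f a = f b\<close> by (auto simp: Pairs_def neq_iff)
      then have "b \<in> Repeated \<or> a \<in> Repeated" unfolding Repeated_def by force
      with a b show False by blast
    qed
  qed
  then have "card (X - Repeated) \<le> card (f ` X)"
    using assms by (simp add: card_image [symmetric] card_mono image_mono)
  moreover have "card Repeated \<le> card Pairs"
    unfolding Repeated_def using \<open>finite Pairs\<close> by (rule card_image_le)
  moreover have "card X \<le> card (X - Repeated) + card Repeated"
  proof -
    have "card X \<le> card ((X - Repeated) \<union> Repeated)"
      using assms \<open>finite Pairs\<close> unfolding Repeated_def by (intro card_mono) auto
    also have "\<dots> \<le> card (X - Repeated) + card Repeated" by (rule card_Un_le)
    finally show ?thesis .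
  qed
  ultimately show ?thesis unfolding Pairs_def by linarith
qed

lemma card_le_num_residues_add_pairs:
  fixes X :: "nat set"
  assumes "finite X"
  shows "card X \<le> num_residues X p + card {(x, y) \<in> X \<times> X. x < y \<and> p dvd y - x}"
proof -
  have "x mod p = y mod p \<longleftrightarrow> p dvd y - x" if "x < y" for x y :: nat
    using that mod_eq_dvd_iff_nat[of x y p] by (metis less_imp_le_nat)
  then have "{(x, y) \<in> X \<times> X. x < y \<and> x mod p = y mod p} = {(x, y) \<in> X \<times> X. x < y \<and> p dvd y - x}"
    by auto
  then show ?thesis
    using card_le_card_image_add_collisions[OF assms, of "\<lambda>x. x mod p"]
    unfolding num_residues_def by simp
qed

lemma num_residues_le_card:
  assumes "finite X"
  shows "num_residues X p \<le> card X"
  unfolding num_residues_def using assms by (rule card_image_le)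

lemma sum_residue_deficits_le:
  fixes X P :: "nat set" and M :: nat
  assumes "finite P" "\<And>p. p \<in> P \<Longrightarrow> prime p" "X \<subseteq> {1..10^M}" "M \<ge> 2"
  shows "(\<Sum>p\<in>P. real (card X) - real (num_residues X p))
           \<le> real (card X) ^ 2 * (11 * real M / ln (real M))"
proof -
  define Pairs where "Pairs = {(x, y) \<in> X \<times> X. x < y}"
  define K where "K = 11 * real M / ln (real M)"
  have "finite X" using assms(3) finite_subset by blast
  moreover have "Pairs \<subseteq> X \<times> X" unfolding Pairs_def by auto
  ultimately have fin: "finite Pairs" using finite_subset by blast
  let ?divides = "\<lambda>p (x, y). if p dvd y - x then 1 else (0::real)"
  have deficit: "real (card X) - real (num_residues X p) \<le> (\<Sum>q\<in>Pairs. ?divides p q)" for p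
  proof -
    have "{(x, y) \<in> X \<times> X. x < y \<and> p dvd y - x} = {q \<in> Pairs. p dvd snd q - fst q}"
      unfolding Pairs_def by auto
    then have "real (card X) - real (num_residues X p) \<le> real (card {q \<in> Pairs. p dvd snd q - fst q})"
      using card_le_num_residues_add_pairs[OF \<open>finite X\<close>, of p] by simp
    also have "\<dots> = (\<Sum>q\<in>Pairs. ?divides p q)"
      using fin by (simp add: sum.If_cases case_prod_beta Int_def)
    finally show ?thesis .
  qed
  have few_divisors: "(\<Sum>p\<in>P. ?divides p q) \<le> K" if "q \<in> Pairs" for q
  proof -
    obtain x y where q: "q = (x, y)" by (cases q)
    then have "x \<in> X" "y \<in> X" "x < y" using that unfolding Pairs_def by auto
    then have d: "0 < y - x" "y - x \<le> 10 ^ M" using assms(3) by auto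
    have "{p \<in> P. p dvd y - x} \<subseteq> prime_factors (y - x)"
      using assms(2) d by (auto simp: prime_factors_dvd)
    then have "card {p \<in> P. p dvd y - x} \<le> card (prime_factors (y - x))"
      by (intro card_mono) auto
    then show ?thesis
      using card_prime_factors_le[OF d assms(4)] assms(1)
      by (simp add: q K_def sum.If_cases Int_def)
  qed
  have "(\<Sum>p\<in>P. real (card X) - real (num_residues X p)) \<le> (\<Sum>p\<in>P. \<Sum>q\<in>Pairs. ?divides p q)"
    by (intro sum_mono deficit)
  also have "\<dots> = (\<Sum>q\<in>Pairs. \<Sum>p\<in>P. ?divides p q)"
    by (rule sum.swap)
  also have "\<dots> \<le> real (card Pairs) * K"
    using sum_mono[OF few_divisors] by simp
  also have "\<dots> \<le> real (card X) ^ 2 * K"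
  proof -
    have "card Pairs \<le> card (X \<times> X)"
      unfolding Pairs_def using \<open>finite X\<close> by (intro card_mono) auto
    then show ?thesis
      using assms(4) by (intro mult_right_mono) (simp_all add: K_def power2_eq_square card_cartesian_product flip: of_nat_mult)
  qed
  finally show ?thesis unfolding K_def .
qed

lemma card_exceeding_mult_le_sum:
  fixes f :: "'a \<Rightarrow> real"
  assumes "finite A" "\<And>a. a \<in> A \<Longrightarrow> f a \<ge> 0"
  shows "real (card {a \<in> A. T < f a}) * T \<le> sum f A"
proof -
  have "real (card {a \<in> A. T < f a}) * T = (\<Sum>a\<in>{a \<in> A. T < f a}. T)" by simp
  also have "\<dots> \<le> (\<Sum>a\<in>{a \<in> A. T < f a}. f a)" by (intro sum_mono) auto
  also have "\<dots> \<le> sum f A" using assms by (intro sum_mono2) auto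
  finally show ?thesis .
qed

lemma card_large_residue_deficit_le:
  fixes X :: "nat set" and N M :: nat and D :: real
  assumes X: "X \<subseteq> {1..10^M}" and M: "M \<ge> 2" and D: "D > 0"
  defines "T \<equiv> 4 * real (card X) /
                 (1 + real (prime_pi N) * ln (real M) / (real M * real (card X) * D))"
  shows "real (card {p. prime p \<and> p \<le> N \<and> T < real (card X) - real (num_residues X p)})
           \<le> 4 * real (prime_pi N) / D"
proof -
  define P where "P = {p::nat. prime p \<and> p \<le> N}"
  define x where "x = real (card X)"
  define \<pi> where "\<pi> = real (prime_pi N)"
  define u where "u = x * real M / ln (real M)"
  define A where "A = \<pi> / (u * D)"
  define deficit where "deficit = (\<lambda>p. x - real (num_residues X p))"
  define Bad where "Bad = {p \<in> P. T < deficit p}"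
  have "finite X" using X finite_subset by blast
  have "finite P" unfolding P_def by simp
  have lnM: "ln (real M) > 0" using M by simp
  have "\<pi> \<ge> 0" "x \<ge> 0" unfolding \<pi>_def x_def by simp_all
  then have "u \<ge> 0" "A \<ge> 0" unfolding u_def A_def using lnM D by simp_all
  have T: "T = 4 * x / (1 + A)"
    unfolding T_def A_def u_def x_def \<pi>_def using lnM by (simp add: field_simps)
  have deficit: "0 \<le> deficit p" "deficit p \<le> x" for p
    unfolding deficit_def x_def using num_residues_le_card[OF \<open>finite X\<close>, of p] by simp_all
  have "real (card Bad) \<le> 4 * \<pi> / D"
  proof (cases "A \<le> 3")
    case True
    then have "A * x \<le> 3 * x" using \<open>x \<ge> 0\<close> by (rule mult_right_mono)
    then have "x \<le> T" unfolding T using \<open>x \<ge> 0\<close> \<open>A \<ge> 0\<close> by (simp add: field_simps)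
    then have "deficit p \<le> T" for p using deficit(2)[of p] by linarith
    then have "Bad = {}" unfolding Bad_def using leD by blast
    then show ?thesis using \<open>\<pi> \<ge> 0\<close> D by simp
  next
    case False
    then have "u \<noteq> 0" unfolding A_def by auto
    then have "u > 0" using \<open>u \<ge> 0\<close> by simp
    then have "x > 0"
      unfolding u_def using lnM \<open>x \<ge> 0\<close> by (simp add: zero_less_divide_iff zero_less_mult_iff)
    have "real (card Bad) * T \<le> sum deficit P"
      unfolding Bad_def using \<open>finite P\<close> deficit(1) by (rule card_exceeding_mult_le_sum)
    also have "\<dots> \<le> x ^ 2 * (11 * real M / ln (real M))"
      unfolding deficit_def x_def P_def using X M by (intro sum_residue_deficits_le) auto
    also have "\<dots> = x * (11 * u)" unfolding u_def by (simp add: power2_eq_square)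
    finally have "x * (real (card Bad) * 4) \<le> x * (11 * u * (1 + A))"
      unfolding T using \<open>A \<ge> 0\<close> by (simp add: field_simps)
    then have "real (card Bad) * 4 \<le> 11 * u * (1 + A)" using \<open>x > 0\<close> by simp
    also have "\<dots> = 11 * u + 11 * \<pi> / D"
      using \<open>u > 0\<close> D unfolding A_def by (simp add: field_simps)
    finally have "real (card Bad) * 4 \<le> 11 * u + 11 * \<pi> / D" .
    moreover have "3 * u < \<pi> / D"
      using False \<open>u > 0\<close> D unfolding A_def by (simp add: field_simps)
    moreover have "\<pi> / D \<ge> 0" using \<open>\<pi> \<ge> 0\<close> D by simp
    ultimately show ?thesis by (simp add: field_simps)
  qed
  moreover have "{p. prime p \<and> p \<le> N \<and> T < real (card X) - real (num_residues X p)} = Bad"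
    unfolding Bad_def P_def deficit_def x_def by auto
  ultimately show ?thesis unfolding \<pi>_def by simp
qed

lemma card_primes_num_residues_close_ge:
  fixes X :: "nat set" and N M :: nat and D :: real
  assumes X: "X \<subseteq> {1..10^M}" and M: "M \<ge> 2" and D: "D > 0"
  shows "real (card {p::nat. prime p \<and> p \<le> N \<and>
                 \<bar>real (num_residues X p) - real (card X)\<bar>
                   \<le> 4 * real (card X) /
                      (1 + real (prime_pi N) * ln (real M) /
                           (real M * real (card X) * D))})
           \<ge> real (prime_pi N) * (1 - 4 / D)"
proof -
  define T where "T = 4 * real (card X) /
                 (1 + real (prime_pi N) * ln (real M) / (real M * real (card X) * D))"
  define P where "P = {p::nat. prime p \<and> p \<le> N}"
  define Good where "Good = {p \<in> P. real (card X) - real (num_residues X p) \<le> T}"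
  define Bad where "Bad = {p \<in> P. T < real (card X) - real (num_residues X p)}"
  have "finite X" using X finite_subset by blast
  have "card Good + card Bad = prime_pi N"
    unfolding prime_pi_def P_def[symmetric] Good_def Bad_def
    by (subst card_Un_disjoint [symmetric]) (auto simp: P_def intro: arg_cong[of _ _ card])
  moreover have "real (card Bad) \<le> 4 * real (prime_pi N) / D"
    using card_large_residue_deficit_le[OF X M D, of N] unfolding Bad_def P_def T_def by simp
  moreover have "{p. prime p \<and> p \<le> N \<and> \<bar>real (num_residues X p) - real (card X)\<bar> \<le> T} = Good"
    using num_residues_le_card[OF \<open>finite X\<close>] unfolding Good_def P_def by fastforce
  ultimately show ?thesis unfolding T_def by (simp add: algebra_simps)
qed

theorem theorem2:
  "\<exists>C::real. C > 0 \<and>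
     (\<forall>\<Delta>::nat \<Rightarrow> real. filterlim \<Delta> at_top sequentially \<longrightarrow>
       (\<exists>N0 M0::nat. \<forall>N M :: nat. N \<ge> N0 \<longrightarrow> M \<ge> M0 \<longrightarrow>
          (\<forall>X::nat set. X \<subseteq> {1..10^M} \<longrightarrow>
             real (card {p::nat. prime p \<and> p \<le> N \<and>
                 \<bar>real (num_residues X p) - real (card X)\<bar>
                   \<le> C * real (card X) /
                      (1 + real (prime_pi N) * ln (real M) /
                           (real M * real (card X) * \<Delta> N))})
             \<ge> real (prime_pi N) * (1 - C / \<Delta> N))))"
proof (intro exI[of _ 4] conjI, simp, intro allI impI, goal_cases)
  case (1 \<Delta>)
  then obtain N0 where "\<forall>N\<ge>N0. \<Delta> N > 0"
    by (auto simp: filterlim_at_top_dense eventually_sequentially)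
  with card_primes_num_residues_close_ge show ?case by blast
qed

end
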